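(* Let $\Bbbk$ be a field of characteristic $0$ and let $J$ be a special Jordan dialgebra such that $\bar J$ is a special Jordan algebra. Then $\widehat J=\bar J\oplus J$ is a special Jordan algebra.
   Context: An associative dialgebra is a vector space with bilinear $\vdash,\dashv$ satisfying $(x\dashv y)\vdash z=(x\vdash y)\vdash z$, $x\dashv(y\vdash z)=x\dashv(y\dashv z)$, $(x\vdash y)\vdash z=x\vdash(y\vdash z)$, $(x\dashv y)\dashv z=x\dashv(y\dashv z)$, $(x\vdash y)\dashv z=x\vdash(y\dashv z)$; $D^{(+)}$ is $D$ with $a\vdash_+b=\tfrac12(a\vdash b+b\dashv a)$, $a\dashv_+b=\tfrac12(a\dashv b+b\vdash a)$. A special Jordan dialgebra is a subdialgebra $J$ of some $D^{(+)}$. $\bar J=J/\mathrm{span}\{a\vdash_+b-a\dashv_+b\}$ is an ordinary algebra acting on $J$ by $\bar a\cdot v=a\vdash_+v$, $v\cdot\bar a=v\dashv_+a$; $\widehat J=\bar J\oplus J$ is the split null extension with product $(\bar a+m)(\bar b+n)=\bar a\bar b+(a\vdash_+n+m\dashv_+b)$. A Jordan algebra is special if it embeds into $A^{(+)}$ (product $\tfrac12(ab+ba)$) for an associative algebra $A$. *)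

theory Defs
  imports Main "HOL.Vector_Spaces"
begin

record ('k, 'v) kalg =
  acar   :: "'v set"
  aadd   :: "'v \<Rightarrow> 'v \<Rightarrow> 'v"
  azero  :: "'v"
  asmult :: "'k \<Rightarrow> 'v \<Rightarrow> 'v"
  amult  :: "'v \<Rightarrow> 'v \<Rightarrow> 'v"

definition k_algebra :: "('k::field, 'v) kalg \<Rightarrow> bool" where
  "k_algebra A \<longleftrightarrow>
     azero A \<in> acar A \<and>
     (\<forall>x\<in>acar A. \<forall>y\<in>acar A. aadd A x y \<in> acar A) \<and>
     (\<forall>c. \<forall>x\<in>acar A. asmult A c x \<in> acar A) \<and>
     (\<forall>x\<in>acar A. \<forall>y\<in>acar A. amult A x y \<in> acar A) \<and>
     (\<forall>x\<in>acar A. \<forall>y\<in>acar A. \<forall>z\<in>acar A. aadd A (aadd A x y) z = aadd A x (aadd A y z)) \<and>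
     (\<forall>x\<in>acar A. \<forall>y\<in>acar A. aadd A x y = aadd A y x) \<and>
     (\<forall>x\<in>acar A. aadd A (azero A) x = x) \<and>
     (\<forall>x\<in>acar A. \<exists>y\<in>acar A. aadd A x y = azero A) \<and>
     (\<forall>c. \<forall>x\<in>acar A. \<forall>y\<in>acar A. asmult A c (aadd A x y) = aadd A (asmult A c x) (asmult A c y)) \<and>
     (\<forall>c d. \<forall>x\<in>acar A. asmult A (c + d) x = aadd A (asmult A c x) (asmult A d x)) \<and>
     (\<forall>c d. \<forall>x\<in>acar A. asmult A c (asmult A d x) = asmult A (c * d) x) \<and>
     (\<forall>x\<in>acar A. asmult A 1 x = x) \<and>
     (\<forall>x\<in>acar A. \<forall>y\<in>acar A. \<forall>z\<in>acar A. amult A (aadd A x y) z = aadd A (amult A x z) (amult A y z)) \<and>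
     (\<forall>x\<in>acar A. \<forall>y\<in>acar A. \<forall>z\<in>acar A. amult A x (aadd A y z) = aadd A (amult A x y) (amult A x z)) \<and>
     (\<forall>c. \<forall>x\<in>acar A. \<forall>y\<in>acar A. amult A (asmult A c x) y = asmult A c (amult A x y)) \<and>
     (\<forall>c. \<forall>x\<in>acar A. \<forall>y\<in>acar A. amult A x (asmult A c y) = asmult A c (amult A x y))"

definition assoc_algebra :: "('k::field, 'v) kalg \<Rightarrow> bool" where
  "assoc_algebra A \<longleftrightarrow> k_algebra A \<and>
     (\<forall>x\<in>acar A. \<forall>y\<in>acar A. \<forall>z\<in>acar A. amult A (amult A x y) z = amult A x (amult A y z))"

definition plus_algebra :: "('k::field, 'v) kalg \<Rightarrow> ('k, 'v) kalg" where
  "plus_algebra A = A\<lparr>amult := (\<lambda>x y. asmult A (1/2) (aadd A (amult A x y) (amult A y x)))\<rparr>"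

definition alg_embedding :: "('k::field, 'v) kalg \<Rightarrow> ('k, 'w) kalg \<Rightarrow> ('v \<Rightarrow> 'w) \<Rightarrow> bool" where
  "alg_embedding A B f \<longleftrightarrow>
     f ` acar A \<subseteq> acar B \<and> inj_on f (acar A) \<and>
     (\<forall>x\<in>acar A. \<forall>y\<in>acar A. f (aadd A x y) = aadd B (f x) (f y)) \<and>
     (\<forall>c. \<forall>x\<in>acar A. f (asmult A c x) = asmult B c (f x)) \<and>
     (\<forall>x\<in>acar A. \<forall>y\<in>acar A. f (amult A x y) = amult B (f x) (f y))"

text \<open>A is a special Jordan algebra, with the enveloping associative algebra taken on
  a carrier inside the type 'u.\<close>
definition special_jordan_in :: "'u itself \<Rightarrow> ('k::field, 'v) kalg \<Rightarrow> bool" where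
  "special_jordan_in (U :: 'u itself) A \<longleftrightarrow> k_algebra A \<and>
     (\<exists>(B :: ('k, 'u) kalg) f. assoc_algebra B \<and> alg_embedding A (plus_algebra B) f)"

definition bilin :: "('k::field \<Rightarrow> 'd::ab_group_add \<Rightarrow> 'd) \<Rightarrow> ('d \<Rightarrow> 'd \<Rightarrow> 'd) \<Rightarrow> bool" where
  "bilin scale p \<longleftrightarrow>
     (\<forall>x y z. p (x + y) z = p x z + p y z) \<and> (\<forall>x y z. p x (y + z) = p x y + p x z) \<and>
     (\<forall>c x y. p (scale c x) y = scale c (p x y)) \<and> (\<forall>c x y. p x (scale c y) = scale c (p x y))"

text \<open>\<open>lv\<close> is \<open>\<turnstile>\<close>, \<open>rv\<close> is \<open>\<stileturn>\<close>; the dialgebra D is the whole type 'd.\<close>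
definition assoc_dialgebra ::
  "('k::field \<Rightarrow> 'd::ab_group_add \<Rightarrow> 'd) \<Rightarrow> ('d \<Rightarrow> 'd \<Rightarrow> 'd) \<Rightarrow> ('d \<Rightarrow> 'd \<Rightarrow> 'd) \<Rightarrow> bool" where
  "assoc_dialgebra scale lv rv \<longleftrightarrow> vector_space scale \<and> bilin scale lv \<and> bilin scale rv \<and>
     (\<forall>x y z. lv (rv x y) z = lv (lv x y) z) \<and>
     (\<forall>x y z. rv x (lv y z) = rv x (rv y z)) \<and>
     (\<forall>x y z. lv (lv x y) z = lv x (lv y z)) \<and>
     (\<forall>x y z. rv (rv x y) z = rv x (rv y z)) \<and>
     (\<forall>x y z. rv (lv x y) z = lv x (rv y z))"

definition lvp :: "('k::field \<Rightarrow> 'd::ab_group_add \<Rightarrow> 'd) \<Rightarrow> ('d \<Rightarrow> 'd \<Rightarrow> 'd) \<Rightarrow> ('d \<Rightarrow> 'd \<Rightarrow> 'd) \<Rightarrow> 'd \<Rightarrow> 'd \<Rightarrow> 'd" where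
  "lvp scale lv rv a b = scale (1/2) (lv a b + rv b a)"

definition rvp :: "('k::field \<Rightarrow> 'd::ab_group_add \<Rightarrow> 'd) \<Rightarrow> ('d \<Rightarrow> 'd \<Rightarrow> 'd) \<Rightarrow> ('d \<Rightarrow> 'd \<Rightarrow> 'd) \<Rightarrow> 'd \<Rightarrow> 'd \<Rightarrow> 'd" where
  "rvp scale lv rv a b = scale (1/2) (rv a b + lv b a)"

definition special_jordan_dialgebra ::
  "('k::field \<Rightarrow> 'd::ab_group_add \<Rightarrow> 'd) \<Rightarrow> ('d \<Rightarrow> 'd \<Rightarrow> 'd) \<Rightarrow> ('d \<Rightarrow> 'd \<Rightarrow> 'd) \<Rightarrow> 'd set \<Rightarrow> bool" where
  "special_jordan_dialgebra scale lv rv J \<longleftrightarrow> assoc_dialgebra scale lv rv \<and>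
     module.subspace scale J \<and>
     (\<forall>a\<in>J. \<forall>b\<in>J. lvp scale lv rv a b \<in> J \<and> rvp scale lv rv a b \<in> J)"

definition annI :: "('k::field \<Rightarrow> 'd::ab_group_add \<Rightarrow> 'd) \<Rightarrow> ('d \<Rightarrow> 'd \<Rightarrow> 'd) \<Rightarrow> ('d \<Rightarrow> 'd \<Rightarrow> 'd) \<Rightarrow> 'd set \<Rightarrow> 'd set" where
  "annI scale lv rv J = module.span scale
     {lvp scale lv rv a b - rvp scale lv rv a b | a b. a \<in> J \<and> b \<in> J}"

definition coset :: "'d::ab_group_add set \<Rightarrow> 'd \<Rightarrow> 'd set" where
  "coset I x = (\<lambda>i. x + i) ` I"

definition rep :: "'d set \<Rightarrow> 'd" where
  "rep X = (SOME x. x \<in> X)"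

definition Jbar :: "('k::field \<Rightarrow> 'd::ab_group_add \<Rightarrow> 'd) \<Rightarrow> ('d \<Rightarrow> 'd \<Rightarrow> 'd) \<Rightarrow> ('d \<Rightarrow> 'd \<Rightarrow> 'd) \<Rightarrow> 'd set
                    \<Rightarrow> ('k, 'd set) kalg" where
  "Jbar scale lv rv J = (let I = annI scale lv rv J in
     \<lparr> acar = coset I ` J,
       aadd = (\<lambda>X Y. coset I (rep X + rep Y)),
       azero = coset I 0,
       asmult = (\<lambda>c X. coset I (scale c (rep X))),
       amult = (\<lambda>X Y. coset I (lvp scale lv rv (rep X) (rep Y))) \<rparr>)"

text \<open>\<open>J hat = J bar \<oplus> J\<close>, elements written as pairs \<open>(a bar, m)\<close>, product
  \<open>(a bar + m)(b bar + n) = a bar b bar + (a \<turnstile>+ n + m \<stileturn>+ b)\<close>.\<close>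
definition Jhat :: "('k::field \<Rightarrow> 'd::ab_group_add \<Rightarrow> 'd) \<Rightarrow> ('d \<Rightarrow> 'd \<Rightarrow> 'd) \<Rightarrow> ('d \<Rightarrow> 'd \<Rightarrow> 'd) \<Rightarrow> 'd set
                    \<Rightarrow> ('k, 'd set \<times> 'd) kalg" where
  "Jhat scale lv rv J = (let B = Jbar scale lv rv J in
     \<lparr> acar = acar B \<times> J,
       aadd = (\<lambda>(X, m) (Y, n). (aadd B X Y, m + n)),
       azero = (azero B, 0),
       asmult = (\<lambda>c (X, m). (asmult B c X, scale c m)),
       amult = (\<lambda>(X, m) (Y, n). (amult B X Y,
                   lvp scale lv rv (rep X) n + rvp scale lv rv m (rep Y))) \<rparr>)"

end

theory Submission
  imports Defs
begin

text \<open>Let \<open>f\<close> embed \<open>J bar\<close> into \<open>B^(+)\<close> with \<open>B\<close> associative. The pairs \<open>(L\<^sub>a, R\<^sub>b)\<close>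
  of left \<open>\<turnstile>\<close>- and right \<open>\<stileturn>\<close>-multiplication operators of the associative dialgebra \<open>D\<close> form an
  associative algebra under composition, and \<open>D\<close> is a bimodule over it; let \<open>O\<close> be the split null
  extension. Then \<open>(a bar, m) \<mapsto> (f (a bar), (L\<^sub>a, R\<^sub>a), m)\<close> embeds \<open>J hat\<close> into \<open>(B \<times> O)^(+)\<close>:
  the dialgebra identities turn symmetrised products of operators into operators of \<open>\<turnstile>\<^sub>+\<close>-products,
  and \<open>L\<^sub>a\<close>, \<open>R\<^sub>a\<close> depend only on \<open>a bar\<close> because the elements \<open>a \<turnstile>\<^sub>+ b - a \<stileturn>\<^sub>+ b\<close> annihilate \<open>D\<close>.
  Finally the envelope is cut down to the subalgebra generated by the image of \<open>J hat\<close>; its elements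
  are values of terms over \<open>J hat\<close>, and coding terms as trees gives an envelope on the prescribed type.\<close>

section \<open>Algebras given by carrier and operations\<close>

locale k_alg =
  fixes A :: "('k::field, 'v) kalg"
  assumes zero_closed: "azero A \<in> acar A"
    and add_closed: "x \<in> acar A \<Longrightarrow> y \<in> acar A \<Longrightarrow> aadd A x y \<in> acar A"
    and smult_closed: "x \<in> acar A \<Longrightarrow> asmult A c x \<in> acar A"
    and mult_closed: "x \<in> acar A \<Longrightarrow> y \<in> acar A \<Longrightarrow> amult A x y \<in> acar A"
    and add_assoc: "x \<in> acar A \<Longrightarrow> y \<in> acar A \<Longrightarrow> z \<in> acar A \<Longrightarrow>
      aadd A (aadd A x y) z = aadd A x (aadd A y z)"
    and add_commute: "x \<in> acar A \<Longrightarrow> y \<in> acar A \<Longrightarrow> aadd A x y = aadd A y x"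
    and zero_add: "x \<in> acar A \<Longrightarrow> aadd A (azero A) x = x"
    and add_inverse_ex: "x \<in> acar A \<Longrightarrow> \<exists>y\<in>acar A. aadd A x y = azero A"
    and smult_add_right: "x \<in> acar A \<Longrightarrow> y \<in> acar A \<Longrightarrow>
      asmult A c (aadd A x y) = aadd A (asmult A c x) (asmult A c y)"
    and smult_add_left: "x \<in> acar A \<Longrightarrow> asmult A (c + d) x = aadd A (asmult A c x) (asmult A d x)"
    and smult_smult: "x \<in> acar A \<Longrightarrow> asmult A c (asmult A d x) = asmult A (c * d) x"
    and smult_one: "x \<in> acar A \<Longrightarrow> asmult A 1 x = x"
    and mult_add_left: "x \<in> acar A \<Longrightarrow> y \<in> acar A \<Longrightarrow> z \<in> acar A \<Longrightarrow>
      amult A (aadd A x y) z = aadd A (amult A x z) (amult A y z)"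
    and mult_add_right: "x \<in> acar A \<Longrightarrow> y \<in> acar A \<Longrightarrow> z \<in> acar A \<Longrightarrow>
      amult A x (aadd A y z) = aadd A (amult A x y) (amult A x z)"
    and mult_smult_left: "x \<in> acar A \<Longrightarrow> y \<in> acar A \<Longrightarrow>
      amult A (asmult A c x) y = asmult A c (amult A x y)"
    and mult_smult_right: "x \<in> acar A \<Longrightarrow> y \<in> acar A \<Longrightarrow>
      amult A x (asmult A c y) = asmult A c (amult A x y)"

lemma k_alg_iff_k_algebra: "k_alg A \<longleftrightarrow> k_algebra A"
proof
  assume "k_alg A"
  then interpret k_alg A .
  show "k_algebra A"
    unfolding k_algebra_def
    by (intro conjI ballI allI; rule zero_closed add_closed smult_closed mult_closed add_assoc add_commute
        zero_add add_inverse_ex smult_add_right smult_add_left smult_smult smult_one mult_add_left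
        mult_add_right mult_smult_left mult_smult_right; assumption)
next
  assume "k_algebra A"
  then show "k_alg A"
    unfolding k_algebra_def by (intro k_alg.intro; elim conjE; meson)
qed

lemmas k_algebraI = k_alg_iff_k_algebra[THEN iffD1]

context k_alg
begin

lemma add_zero: "x \<in> acar A \<Longrightarrow> aadd A x (azero A) = x"
  using add_commute zero_add zero_closed by metis

lemma add_idem_eq_zero:
  assumes x: "x \<in> acar A" and idem: "aadd A x x = x"
  shows "x = azero A"
proof -
  obtain y where y: "y \<in> acar A" "aadd A x y = azero A" using add_inverse_ex[OF x] by blast
  have "x = aadd A x (aadd A x y)" using y add_zero x by simp
  also have "\<dots> = aadd A (aadd A x x) y" using add_assoc x y by simp
  also have "\<dots> = azero A" using idem y by simp
  finally show ?thesis .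
qed

lemma smult_zero: "x \<in> acar A \<Longrightarrow> asmult A 0 x = azero A"
  by (rule add_idem_eq_zero) (auto simp: smult_closed smult_add_left[symmetric])

lemma add_smult_minus_one: "x \<in> acar A \<Longrightarrow> aadd A x (asmult A (-1) x) = azero A"
  using smult_add_left[of x 1 "-1"] by (simp add: smult_one smult_zero)

end

lemma assoc_algebraD:
  assumes "assoc_algebra A"
  shows "k_alg A"
    and "x \<in> acar A \<Longrightarrow> y \<in> acar A \<Longrightarrow> z \<in> acar A \<Longrightarrow> amult A (amult A x y) z = amult A x (amult A y z)"
  using assms by (auto simp: assoc_algebra_def k_alg_iff_k_algebra)

lemma plus_algebra_simps [simp]:
  "acar (plus_algebra A) = acar A" "aadd (plus_algebra A) = aadd A" "azero (plus_algebra A) = azero A"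
  "asmult (plus_algebra A) = asmult A"
  "amult (plus_algebra A) x y = asmult A (1/2) (aadd A (amult A x y) (amult A y x))"
  by (simp_all add: plus_algebra_def)

lemma k_algebra_plus_algebra:
  assumes "k_algebra A"
  shows "k_algebra (plus_algebra A)"
proof -
  interpret k_alg A using assms by (simp add: k_alg_iff_k_algebra)
  have add_swap: "aadd A (aadd A a b) (aadd A c d) = aadd A (aadd A a c) (aadd A b d)"
    if "a \<in> acar A" "b \<in> acar A" "c \<in> acar A" "d \<in> acar A" for a b c d
    using that by (metis add_assoc add_commute add_closed)
  note closed = zero_closed add_closed smult_closed mult_closed
  show ?thesis
  proof (rule k_algebraI, unfold_locales)
    fix x y z assume "x \<in> acar (plus_algebra A)" "y \<in> acar (plus_algebra A)" "z \<in> acar (plus_algebra A)"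
    then show "amult (plus_algebra A) (aadd (plus_algebra A) x y) z =
        aadd (plus_algebra A) (amult (plus_algebra A) x z) (amult (plus_algebra A) y z)"
      and "amult (plus_algebra A) x (aadd (plus_algebra A) y z) =
        aadd (plus_algebra A) (amult (plus_algebra A) x y) (amult (plus_algebra A) x z)"
      by (simp_all add: mult_add_left mult_add_right closed add_swap smult_add_right[symmetric])
  qed (auto simp: closed add_assoc zero_add add_inverse_ex smult_add_right smult_add_left smult_smult
      smult_one mult_smult_left mult_smult_right mult.commute intro: add_commute)
qed

lemma alg_embedding_zero:
  assumes "k_algebra A" "k_algebra B" "alg_embedding A B f"
  shows "f (azero A) = azero B"
proof -
  interpret A: k_alg A using assms by (simp add: k_alg_iff_k_algebra)
  interpret B: k_alg B using assms by (simp add: k_alg_iff_k_algebra)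
  have "aadd B (f (azero A)) (f (azero A)) = f (azero A)"
    using assms(3) A.zero_closed A.zero_add[OF A.zero_closed] unfolding alg_embedding_def by metis
  then show ?thesis
    using B.add_idem_eq_zero assms(3) A.zero_closed by (auto simp: alg_embedding_def)
qed

definition subalgebra :: "'u set \<Rightarrow> ('k::field, 'u) kalg \<Rightarrow> bool" where
  "subalgebra C B \<longleftrightarrow> C \<subseteq> acar B \<and> azero B \<in> C \<and>
     (\<forall>x\<in>C. \<forall>y\<in>C. aadd B x y \<in> C) \<and> (\<forall>c. \<forall>x\<in>C. asmult B c x \<in> C) \<and>
     (\<forall>x\<in>C. \<forall>y\<in>C. amult B x y \<in> C)"

lemma subalgebra_subset: "subalgebra C B \<Longrightarrow> C \<subseteq> acar B"
  by (simp add: subalgebra_def)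

lemma subalgebra_closed:
  assumes "subalgebra C B"
  shows "azero B \<in> C" "x \<in> C \<Longrightarrow> y \<in> C \<Longrightarrow> aadd B x y \<in> C" "x \<in> C \<Longrightarrow> asmult B c x \<in> C"
    "x \<in> C \<Longrightarrow> y \<in> C \<Longrightarrow> amult B x y \<in> C"
  using assms by (auto simp: subalgebra_def)

lemma k_algebra_pullback:
  assumes B: "k_algebra B" and f: "alg_embedding A B f" and closed: "subalgebra (acar A) A"
    and f_zero: "f (azero A) = azero B"
  shows "k_algebra A"
proof -
  interpret B: k_alg B using B by (simp add: k_alg_iff_k_algebra)
  have f_in: "\<And>x. x \<in> acar A \<Longrightarrow> f x \<in> acar B"
    and f_add: "\<And>x y. x \<in> acar A \<Longrightarrow> y \<in> acar A \<Longrightarrow> f (aadd A x y) = aadd B (f x) (f y)"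
    and f_smult: "\<And>c x. x \<in> acar A \<Longrightarrow> f (asmult A c x) = asmult B c (f x)"
    and f_mult: "\<And>x y. x \<in> acar A \<Longrightarrow> y \<in> acar A \<Longrightarrow> f (amult A x y) = amult B (f x) (f y)"
    using f unfolding alg_embedding_def by blast+
  have f_eqD: "\<And>x y. x \<in> acar A \<Longrightarrow> y \<in> acar A \<Longrightarrow> f x = f y \<Longrightarrow> x = y"
    using f by (auto simp: alg_embedding_def dest: inj_onD)
  note simps = subalgebra_closed[OF closed] f_in f_add f_smult f_mult f_zero
  note B_axioms = B.add_assoc B.add_commute B.zero_add B.smult_add_right B.smult_add_left B.smult_smult
    B.smult_one B.mult_add_left B.mult_add_right B.mult_smult_left B.mult_smult_right
  show ?thesis
  proof (rule k_algebraI, unfold_locales)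
    fix x assume x: "x \<in> acar A"
    show "\<exists>y\<in>acar A. aadd A x y = azero A"
      by (rule bexI[of _ "asmult A (-1) x"], rule f_eqD) (simp_all add: x simps B.add_smult_minus_one)
  qed (simp add: simps | rule f_eqD; simp add: simps B_axioms)+
qed

definition image_alg :: "('k::field, 'u) kalg \<Rightarrow> 'u set \<Rightarrow> ('u \<Rightarrow> 'w) \<Rightarrow> ('k, 'w) kalg" where
  "image_alg B C g = \<lparr> acar = g ` C,
     aadd = (\<lambda>x y. g (aadd B (the_inv_into C g x) (the_inv_into C g y))),
     azero = g (azero B),
     asmult = (\<lambda>c x. g (asmult B c (the_inv_into C g x))),
     amult = (\<lambda>x y. g (amult B (the_inv_into C g x) (the_inv_into C g y))) \<rparr>"

lemma assoc_algebra_image_alg: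
  assumes B: "assoc_algebra B" and C: "subalgebra C B" and g: "inj_on g C"
  shows "assoc_algebra (image_alg B C g)"
proof -
  interpret B: k_alg B using assoc_algebraD(1)[OF B] .
  have inv_g [simp]: "\<And>x. x \<in> C \<Longrightarrow> the_inv_into C g (g x) = x" using g by (simp add: the_inv_into_f_f)
  have in_B [simp]: "\<And>x. x \<in> C \<Longrightarrow> x \<in> acar B" using subalgebra_subset[OF C] by blast
  note simps = subalgebra_closed[OF C] B.add_assoc B.zero_add B.smult_add_right B.smult_add_left
    B.smult_smult B.smult_one B.mult_add_left B.mult_add_right B.mult_smult_left B.mult_smult_right
    assoc_algebraD(2)[OF B]
  have "k_algebra (image_alg B C g)"
  proof (rule k_algebraI, unfold_locales)
    fix x assume "x \<in> acar (image_alg B C g)"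
    then obtain x0 where x0: "x0 \<in> C" "x = g x0" by (auto simp: image_alg_def)
    show "\<exists>y\<in>acar (image_alg B C g). aadd (image_alg B C g) x y = azero (image_alg B C g)"
      by (rule bexI[of _ "g (asmult B (-1) x0)"]) (simp_all add: image_alg_def x0 simps B.add_smult_minus_one)
  next
    fix x y assume "x \<in> acar (image_alg B C g)" "y \<in> acar (image_alg B C g)"
    then show "aadd (image_alg B C g) x y = aadd (image_alg B C g) y x"
      by (auto simp: image_alg_def B.add_commute)
  qed (auto simp: image_alg_def simps)
  then show ?thesis
    unfolding assoc_algebra_def by (auto simp: image_alg_def simps)
qed

lemma alg_embedding_image_alg:
  assumes f: "alg_embedding A (plus_algebra B) f" and C: "subalgebra C B" and f_C: "f ` acar A \<subseteq> C"
    and g: "inj_on g C"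
  shows "alg_embedding A (plus_algebra (image_alg B C g)) (g \<circ> f)"
proof -
  have inv_g [simp]: "\<And>x. x \<in> C \<Longrightarrow> the_inv_into C g (g x) = x"
    using g by (auto simp: the_inv_into_f_f)
  have in_C [simp]: "\<And>x. x \<in> acar A \<Longrightarrow> f x \<in> C" using f_C by blast
  have "inj_on (g \<circ> f) (acar A)"
    using f f_C g by (auto simp: alg_embedding_def intro: comp_inj_on inj_on_subset)
  then show ?thesis
    using f f_C unfolding alg_embedding_def by (auto simp: image_alg_def subalgebra_closed[OF C])
qed

definition prod_alg :: "('k::field, 'u) kalg \<Rightarrow> ('k, 'w) kalg \<Rightarrow> ('k, 'u \<times> 'w) kalg" where
  "prod_alg A B = \<lparr> acar = acar A \<times> acar B,
     aadd = (\<lambda>x y. (aadd A (fst x) (fst y), aadd B (snd x) (snd y))),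
     azero = (azero A, azero B),
     asmult = (\<lambda>c x. (asmult A c (fst x), asmult B c (snd x))),
     amult = (\<lambda>x y. (amult A (fst x) (fst y), amult B (snd x) (snd y))) \<rparr>"

lemma prod_alg_simps:
  "acar (prod_alg A B) = acar A \<times> acar B"
  "aadd (prod_alg A B) u v = (aadd A (fst u) (fst v), aadd B (snd u) (snd v))"
  "azero (prod_alg A B) = (azero A, azero B)"
  "asmult (prod_alg A B) c u = (asmult A c (fst u), asmult B c (snd u))"
  "amult (prod_alg A B) u v = (amult A (fst u) (fst v), amult B (snd u) (snd v))"
  by (simp_all add: prod_alg_def)

lemma plus_algebra_prod_alg_mult:
  "amult (plus_algebra (prod_alg A B)) u v =
     (amult (plus_algebra A) (fst u) (fst v), amult (plus_algebra B) (snd u) (snd v))"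
  by (simp add: prod_alg_def)

lemma assoc_algebra_prod_alg:
  assumes "assoc_algebra A" "assoc_algebra B"
  shows "assoc_algebra (prod_alg A B)"
proof -
  interpret A: k_alg A using assoc_algebraD(1)[OF assms(1)] .
  interpret B: k_alg B using assoc_algebraD(1)[OF assms(2)] .
  have "k_algebra (prod_alg A B)"
  proof (rule k_algebraI, unfold_locales)
    fix x assume "x \<in> acar (prod_alg A B)"
    then have x: "fst x \<in> acar A" "snd x \<in> acar B" by (auto simp: prod_alg_def)
    show "\<exists>y\<in>acar (prod_alg A B). aadd (prod_alg A B) x y = azero (prod_alg A B)"
      by (rule bexI[of _ "(asmult A (-1) (fst x), asmult B (-1) (snd x))"])
        (simp_all add: prod_alg_def x A.smult_closed B.smult_closed A.add_smult_minus_one B.add_smult_minus_one)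
  next
    fix x y assume "x \<in> acar (prod_alg A B)" "y \<in> acar (prod_alg A B)"
    then show "aadd (prod_alg A B) x y = aadd (prod_alg A B) y x"
      by (auto simp: prod_alg_def intro: A.add_commute B.add_commute)
  qed (auto simp: prod_alg_def A.zero_closed A.add_closed A.smult_closed A.mult_closed A.add_assoc
      A.zero_add A.smult_add_right A.smult_add_left A.smult_smult A.smult_one A.mult_add_left
      A.mult_add_right A.mult_smult_left A.mult_smult_right
      B.zero_closed B.add_closed B.smult_closed B.mult_closed B.add_assoc
      B.zero_add B.smult_add_right B.smult_add_left B.smult_smult B.smult_one B.mult_add_left
      B.mult_add_right B.mult_smult_left B.mult_smult_right)
  then show ?thesis
    unfolding assoc_algebra_def
    by (auto simp: prod_alg_def assoc_algebraD(2)[OF assms(1)] assoc_algebraD(2)[OF assms(2)])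
qed

section \<open>Shrinking an associative envelope\<close>

datatype ('v, 'k) alg_term =
  Var 'v | Add "('v, 'k) alg_term" "('v, 'k) alg_term" | Zero | Smult 'k "('v, 'k) alg_term"
  | Mult "('v, 'k) alg_term" "('v, 'k) alg_term"

primrec term_vars :: "('v, 'k) alg_term \<Rightarrow> 'v set" where
  "term_vars (Var v) = {v}"
| "term_vars (Add s t) = term_vars s \<union> term_vars t"
| "term_vars Zero = {}"
| "term_vars (Smult c t) = term_vars t"
| "term_vars (Mult s t) = term_vars s \<union> term_vars t"

primrec term_eval :: "('k, 'u) kalg \<Rightarrow> ('v \<Rightarrow> 'u) \<Rightarrow> ('v, 'k) alg_term \<Rightarrow> 'u" where
  "term_eval B \<rho> (Var v) = \<rho> v"
| "term_eval B \<rho> (Add s t) = aadd B (term_eval B \<rho> s) (term_eval B \<rho> t)"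
| "term_eval B \<rho> Zero = azero B"
| "term_eval B \<rho> (Smult c t) = asmult B c (term_eval B \<rho> t)"
| "term_eval B \<rho> (Mult s t) = amult B (term_eval B \<rho> s) (term_eval B \<rho> t)"

text \<open>A term is coded as a tree: the value at the empty path is the tag 0..4 of the outermost
  constructor, and the subterms are found below the paths starting with \<open>v\<^sub>0\<close> and \<open>v\<^sub>1\<close>.\<close>
primrec term_code :: "'v \<Rightarrow> 'v \<Rightarrow> ('v, 'k::semiring_1) alg_term \<Rightarrow> 'v list \<Rightarrow> 'k" where
  "term_code v\<^sub>0 v\<^sub>1 (Var v) = (\<lambda>w. case w of [] \<Rightarrow> 0 | x # _ \<Rightarrow> if x = v then 1 else 0)"
| "term_code v\<^sub>0 v\<^sub>1 (Add s t) = (\<lambda>w. case w of [] \<Rightarrow> 1 | x # w' \<Rightarrow>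
      if x = v\<^sub>0 then term_code v\<^sub>0 v\<^sub>1 s w' else if x = v\<^sub>1 then term_code v\<^sub>0 v\<^sub>1 t w' else 0)"
| "term_code v\<^sub>0 v\<^sub>1 Zero = (\<lambda>w. case w of [] \<Rightarrow> 2 | _ \<Rightarrow> 0)"
| "term_code v\<^sub>0 v\<^sub>1 (Smult c t) = (\<lambda>w. case w of [] \<Rightarrow> 3 | x # w' \<Rightarrow>
      if x = v\<^sub>0 then term_code v\<^sub>0 v\<^sub>1 t w' else c)"
| "term_code v\<^sub>0 v\<^sub>1 (Mult s t) = (\<lambda>w. case w of [] \<Rightarrow> 4 | x # w' \<Rightarrow>
      if x = v\<^sub>0 then term_code v\<^sub>0 v\<^sub>1 s w' else if x = v\<^sub>1 then term_code v\<^sub>0 v\<^sub>1 t w' else 0)"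

lemma inj_term_code:
  fixes v\<^sub>0 v\<^sub>1 :: 'v
  assumes v: "v\<^sub>0 \<noteq> v\<^sub>1"
  shows "inj (term_code v\<^sub>0 v\<^sub>1 :: ('v, 'k::semiring_char_0) alg_term \<Rightarrow> _)"
proof (rule injI)
  fix s t :: "('v, 'k) alg_term"
  assume "term_code v\<^sub>0 v\<^sub>1 s = term_code v\<^sub>0 v\<^sub>1 t"
  then show "s = t"
  proof (induction s arbitrary: t)
    case (Var v)
    then have "term_code v\<^sub>0 v\<^sub>1 t [] = 0" "term_code v\<^sub>0 v\<^sub>1 t [v] = 1"
      by (simp_all add: fun_cong[OF Var.prems[symmetric]])
    then show ?case
      by (cases t) (auto split: if_splits)
  next
    case (Add s1 s2)
    then have "term_code v\<^sub>0 v\<^sub>1 t [] = 1"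
      "\<And>w. term_code v\<^sub>0 v\<^sub>1 t (v\<^sub>0 # w) = term_code v\<^sub>0 v\<^sub>1 s1 w"
      "\<And>w. term_code v\<^sub>0 v\<^sub>1 t (v\<^sub>1 # w) = term_code v\<^sub>0 v\<^sub>1 s2 w"
      using v by (simp_all add: fun_cong[OF Add.prems[symmetric]])
    then show ?case using Add.IH v by (cases t) (auto simp: fun_eq_iff)
  next
    case Zero
    then have "term_code v\<^sub>0 v\<^sub>1 t [] = 2" by (simp add: fun_cong[OF Zero.prems[symmetric]])
    then show ?case by (cases t) auto
  next
    case (Smult c s1)
    then have "term_code v\<^sub>0 v\<^sub>1 t [] = 3"
      "\<And>w. term_code v\<^sub>0 v\<^sub>1 t (v\<^sub>0 # w) = term_code v\<^sub>0 v\<^sub>1 s1 w"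
      "term_code v\<^sub>0 v\<^sub>1 t [v\<^sub>1] = c"
      using v by (simp_all add: fun_cong[OF Smult.prems[symmetric]])
    then show ?case using Smult.IH v by (cases t) (auto simp: fun_eq_iff)
  next
    case (Mult s1 s2)
    then have "term_code v\<^sub>0 v\<^sub>1 t [] = 4"
      "\<And>w. term_code v\<^sub>0 v\<^sub>1 t (v\<^sub>0 # w) = term_code v\<^sub>0 v\<^sub>1 s1 w"
      "\<And>w. term_code v\<^sub>0 v\<^sub>1 t (v\<^sub>1 # w) = term_code v\<^sub>0 v\<^sub>1 s2 w"
      using v by (simp_all add: fun_cong[OF Mult.prems[symmetric]])
    then show ?case using Mult.IH v by (cases t) (auto simp: fun_eq_iff)
  qed
qed

lemma subalgebra_term_eval:
  assumes E: "k_algebra E" and \<rho>: "\<rho> ` S \<subseteq> acar E"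
  shows "subalgebra (term_eval E \<rho> ` {t. term_vars t \<subseteq> S}) E"
proof -
  interpret E: k_alg E using E by (simp add: k_alg_iff_k_algebra)
  let ?C = "term_eval E \<rho> ` {t. term_vars t \<subseteq> S}"
  have "term_eval E \<rho> t \<in> acar E" if "term_vars t \<subseteq> S" for t
    using that \<rho> by (induction t) (auto simp: E.zero_closed E.add_closed E.smult_closed E.mult_closed)
  moreover have "azero E \<in> ?C" by (rule image_eqI[of _ _ Zero]) auto
  moreover have "aadd E x y \<in> ?C" "amult E x y \<in> ?C" if xy: "x \<in> ?C" "y \<in> ?C" for x y
  proof -
    obtain s t where st: "term_vars s \<subseteq> S" "term_vars t \<subseteq> S" "x = term_eval E \<rho> s" "y = term_eval E \<rho> t"
      using xy by auto
    show "aadd E x y \<in> ?C" using st by (auto intro!: image_eqI[of _ _ "Add s t"])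
    show "amult E x y \<in> ?C" using st by (auto intro!: image_eqI[of _ _ "Mult s t"])
  qed
  moreover have "asmult E c x \<in> ?C" if "x \<in> ?C" for c x
    using that by (auto intro!: image_eqI[of _ _ "Smult c _"])
  ultimately show ?thesis by (auto simp: subalgebra_def)
qed

lemma assoc_envelope_on_list_functions:
  fixes E :: "('k::field_char_0, 'u) kalg" and A :: "('k, 'v) kalg" and v\<^sub>0 v\<^sub>1 :: 'v
  assumes E: "assoc_algebra E" and \<phi>: "alg_embedding A (plus_algebra E) \<phi>" and v: "v\<^sub>0 \<noteq> v\<^sub>1"
  shows "\<exists>(B :: ('k, 'v list \<Rightarrow> 'k) kalg) f. assoc_algebra B \<and> alg_embedding A (plus_algebra B) f"
proof -
  let ?T = "{t :: ('v, 'k) alg_term. term_vars t \<subseteq> acar A}"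
  let ?C = "term_eval E \<phi> ` ?T"
  define g where "g = term_code v\<^sub>0 v\<^sub>1 \<circ> inv_into ?T (term_eval E \<phi>)"
  have C: "subalgebra ?C E"
    using \<phi> assoc_algebraD(1)[OF E]
    by (intro subalgebra_term_eval) (auto simp: alg_embedding_def k_alg_iff_k_algebra)
  have \<phi>_C: "\<phi> ` acar A \<subseteq> ?C"
    by (auto intro!: image_eqI[of _ _ "Var _"])
  have "inj_on g ?C"
    unfolding g_def
    by (rule comp_inj_on[OF inj_on_inv_into]) (auto intro: inj_on_subset[OF inj_term_code[OF v]])
  then show ?thesis
    using assoc_algebra_image_alg[OF E C] alg_embedding_image_alg[OF \<phi> C \<phi>_C] by blast
qed

section \<open>Associative dialgebras and the embedding of \<open>J hat\<close>\<close>

lemma bilinD: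
  assumes "bilin scale p"
  shows "p (x + y) z = p x z + p y z" "p z (x + y) = p z x + p z y"
    "p (scale c x) z = scale c (p x z)" "p z (scale c x) = scale c (p z x)"
    "p 0 z = 0" "p z 0 = 0" "p (- x) z = - p x z" "p z (- x) = - p z x"
    "p (x - y) z = p x z - p y z" "p z (x - y) = p z x - p z y"
proof -
  show add_left: "\<And>x y z. p (x + y) z = p x z + p y z" and add_right: "\<And>x y z. p z (x + y) = p z x + p z y"
    and "p (scale c x) z = scale c (p x z)" "p z (scale c x) = scale c (p z x)"
    using assms by (auto simp: bilin_def)
  show zero_left: "\<And>z. p 0 z = 0" and zero_right: "\<And>z. p z 0 = 0"
    using add_left[of 0 0] add_right[of _ 0 0] by simp_all
  show minus_left: "\<And>x z. p (- x) z = - p x z" and minus_right: "\<And>x z. p z (- x) = - p z x"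
    using add_left[of _ "- _"] add_right[of _ _ "- _"] zero_left zero_right
    by (metis add.right_inverse add_eq_0_iff)+
  show "p (x - y) z = p x z - p y z" "p z (x - y) = p z x - p z y"
    using add_left[of x "- y"] add_right[of z x "- y"] minus_left minus_right by simp_all
qed

locale assoc_dialg =
  fixes scale :: "'k::field \<Rightarrow> 'd::ab_group_add \<Rightarrow> 'd" and lv rv :: "'d \<Rightarrow> 'd \<Rightarrow> 'd"
  assumes assoc_dialgebra: "assoc_dialgebra scale lv rv"
begin

sublocale vector_space scale
  using assoc_dialgebra by (simp add: assoc_dialgebra_def)

lemma lv_bilinear: "bilin scale lv" and rv_bilinear: "bilin scale rv"
  and lv_rv_left: "lv (rv x y) z = lv (lv x y) z"
  and rv_lv_right: "rv x (lv y z) = rv x (rv y z)"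
  and lv_assoc: "lv (lv x y) z = lv x (lv y z)"
  and rv_assoc: "rv (rv x y) z = rv x (rv y z)"
  and lv_rv_assoc: "rv (lv x y) z = lv x (rv y z)"
  using assoc_dialgebra by (auto simp: assoc_dialgebra_def)

lemmas bilin_simps = bilinD[OF lv_bilinear] bilinD[OF rv_bilinear]

end

text \<open>The associative algebra of pairs \<open>(L\<^sub>a, R\<^sub>b)\<close> of left \<open>\<turnstile>\<close>- and right \<open>\<stileturn>\<close>-multiplication
  operators of \<open>D\<close>, extended by the bimodule \<open>D\<close> with zero product.\<close>
definition op_null_ext :: "('k::field \<Rightarrow> 'd::ab_group_add \<Rightarrow> 'd) \<Rightarrow> ('d \<Rightarrow> 'd \<Rightarrow> 'd) \<Rightarrow> ('d \<Rightarrow> 'd \<Rightarrow> 'd)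
    \<Rightarrow> ('k, (('d \<Rightarrow> 'd) \<times> ('d \<Rightarrow> 'd)) \<times> 'd) kalg" where
  "op_null_ext scale lv rv = \<lparr> acar = {((lv a, \<lambda>z. rv z b), m) | a b m. True},
     aadd = (\<lambda>((L, R), m) ((L', R'), n). ((\<lambda>z. L z + L' z, \<lambda>z. R z + R' z), m + n)),
     azero = ((\<lambda>z. 0, \<lambda>z. 0), 0),
     asmult = (\<lambda>c ((L, R), m). ((\<lambda>z. scale c (L z), \<lambda>z. scale c (R z)), scale c m)),
     amult = (\<lambda>((L, R), m) ((L', R'), n). ((L \<circ> L', R' \<circ> R), L n + R' m)) \<rparr>"

context assoc_dialg
begin

abbreviation "Ops \<equiv> op_null_ext scale lv rv"

lemma op_null_ext_simps:
  "acar Ops = {((lv a, \<lambda>z. rv z b), m) | a b m. True}"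
  "azero Ops = ((lv 0, \<lambda>z. rv z 0), 0)"
  "aadd Ops ((lv a, \<lambda>z. rv z b), m) ((lv a', \<lambda>z. rv z b'), n) = ((lv (a + a'), \<lambda>z. rv z (b + b')), m + n)"
  "asmult Ops c ((lv a, \<lambda>z. rv z b), m) = ((lv (scale c a), \<lambda>z. rv z (scale c b)), scale c m)"
  "amult Ops ((lv a, \<lambda>z. rv z b), m) ((lv a', \<lambda>z. rv z b'), n) =
     ((lv (lv a a'), \<lambda>z. rv z (rv b b')), lv a n + rv m b')"
  by (simp_all add: op_null_ext_def fun_eq_iff bilin_simps lv_assoc rv_assoc)

lemma op_null_ext_mem: "((lv a, \<lambda>z. rv z b), m) \<in> acar Ops"
  by (auto simp: op_null_ext_simps)

lemma op_null_ext_cases: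
  assumes "x \<in> acar Ops"
  obtains a b m where "x = ((lv a, \<lambda>z. rv z b), m)"
  using assms by (auto simp: op_null_ext_simps)

lemma assoc_algebra_op_null_ext: "assoc_algebra Ops"
proof -
  note ops = op_null_ext_simps(2-5) op_null_ext_mem
  have "k_algebra Ops"
  proof (rule k_algebraI, unfold_locales)
    fix x assume "x \<in> acar Ops"
    then obtain a b m where "x = ((lv a, \<lambda>z. rv z b), m)" by (rule op_null_ext_cases)
    then show "\<exists>y\<in>acar Ops. aadd Ops x y = azero Ops"
      by (intro bexI[of _ "((lv (- a), \<lambda>z. rv z (- b)), - m)"]; simp only: ops; simp)
  qed ((elim op_null_ext_cases)?; simp only: ops; simp add: bilin_simps algebra_simps)+
  then show ?thesis
    unfolding assoc_algebra_def
    by (auto elim!: op_null_ext_cases simp only: ops; simp add: bilin_simps lv_assoc rv_assoc lv_rv_assoc add_ac)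
qed

lemma op_null_ext_plus_mult:
  "amult (plus_algebra Ops) ((lv x, \<lambda>z. rv z x), m) ((lv y, \<lambda>z. rv z y), n) =
   ((lv (lvp scale lv rv x y), \<lambda>z. rv z (lvp scale lv rv x y)), lvp scale lv rv x n + rvp scale lv rv m y)"
  by (simp add: op_null_ext_def lvp_def rvp_def fun_eq_iff bilin_simps lv_rv_left rv_lv_right lv_assoc rv_assoc
      scale_right_distrib add_ac)

end

locale special_jordan_dialg = assoc_dialg scale lv rv
  for scale :: "'k::field \<Rightarrow> 'd::ab_group_add \<Rightarrow> 'd" and lv rv +
  fixes J :: "'d set"
  assumes special_jordan_dialgebra: "special_jordan_dialgebra scale lv rv J"
begin

abbreviation "I \<equiv> annI scale lv rv J"

lemma J_subspace: "subspace J"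
  and lvp_closed: "a \<in> J \<Longrightarrow> b \<in> J \<Longrightarrow> lvp scale lv rv a b \<in> J"
  and rvp_closed: "a \<in> J \<Longrightarrow> b \<in> J \<Longrightarrow> rvp scale lv rv a b \<in> J"
  using special_jordan_dialgebra by (auto simp: special_jordan_dialgebra_def)

lemma zero_in_J: "0 \<in> J" and add_in_J: "a \<in> J \<Longrightarrow> b \<in> J \<Longrightarrow> a + b \<in> J"
  and scale_in_J: "a \<in> J \<Longrightarrow> scale c a \<in> J"
  using J_subspace subspace_0 subspace_add subspace_scale by blast+

lemma annI_subset_J: "I \<subseteq> J"
  unfolding annI_def
  by (rule span_minimal[OF _ J_subspace]) (auto intro!: subspace_diff[OF J_subspace] lvp_closed rvp_closed)

lemma annI_annihilates:
  assumes "i \<in> I"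
  shows "lv i z = 0" "rv z i = 0"
proof -
  let ?Ann = "{i. \<forall>z. lv i z = 0 \<and> rv z i = 0}"
  have "subspace ?Ann" by (rule subspaceI) (auto simp: bilin_simps)
  moreover have "{lvp scale lv rv a b - rvp scale lv rv a b | a b. a \<in> J \<and> b \<in> J} \<subseteq> ?Ann"
    by (auto simp: lvp_def rvp_def bilin_simps lv_rv_left rv_lv_right scale_right_distrib add_ac)
  ultimately have "I \<subseteq> ?Ann" unfolding annI_def by (rule span_minimal[rotated])
  then show "lv i z = 0" "rv z i = 0" using assms by auto
qed

lemma rep_coset_diff:
  assumes "a \<in> J"
  shows "rep (coset I a) - a \<in> I"
proof -
  have "a \<in> coset I a" unfolding coset_def by (rule image_eqI[of _ _ 0]) (simp_all add: span_zero annI_def)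
  then have "rep (coset I a) \<in> coset I a" unfolding rep_def by (rule someI)
  then show ?thesis unfolding coset_def by auto
qed

lemma rep_coset_in_J: "a \<in> J \<Longrightarrow> rep (coset I a) \<in> J"
  using rep_coset_diff annI_subset_J add_in_J by (metis diff_add_cancel subsetD)

lemma lv_rep_coset: "a \<in> J \<Longrightarrow> lv (rep (coset I a)) = lv a"
  and rv_rep_coset: "a \<in> J \<Longrightarrow> (\<lambda>z. rv z (rep (coset I a))) = (\<lambda>z. rv z a)"
  using annI_annihilates[OF rep_coset_diff] by (auto simp: fun_eq_iff bilin_simps)

lemma Jbar_simps:
  "acar (Jbar scale lv rv J) = coset I ` J"
  "aadd (Jbar scale lv rv J) X Y = coset I (rep X + rep Y)"
  "azero (Jbar scale lv rv J) = coset I 0"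
  "asmult (Jbar scale lv rv J) c X = coset I (scale c (rep X))"
  "amult (Jbar scale lv rv J) X Y = coset I (lvp scale lv rv (rep X) (rep Y))"
  by (simp_all add: Jbar_def Let_def)

lemma Jhat_simps:
  "acar (Jhat scale lv rv J) = acar (Jbar scale lv rv J) \<times> J"
  "aadd (Jhat scale lv rv J) (X, m) (Y, n) = (aadd (Jbar scale lv rv J) X Y, m + n)"
  "azero (Jhat scale lv rv J) = (azero (Jbar scale lv rv J), 0)"
  "asmult (Jhat scale lv rv J) c (X, m) = (asmult (Jbar scale lv rv J) c X, scale c m)"
  "amult (Jhat scale lv rv J) (X, m) (Y, n) =
     (amult (Jbar scale lv rv J) X Y, lvp scale lv rv (rep X) n + rvp scale lv rv m (rep Y))"
  by (simp_all add: Jhat_def Let_def)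

definition Jhat_embed :: "('d set \<Rightarrow> 'u) \<Rightarrow> 'd set \<times> 'd \<Rightarrow> 'u \<times> (('d \<Rightarrow> 'd) \<times> ('d \<Rightarrow> 'd)) \<times> 'd" where
  "Jhat_embed f p = (f (fst p), ((lv (rep (fst p)), \<lambda>z. rv z (rep (fst p))), snd p))"

lemma rep_in_J: "X \<in> acar (Jbar scale lv rv J) \<Longrightarrow> rep X \<in> J"
  by (auto simp: Jbar_simps rep_coset_in_J)

lemma Jhat_cases:
  assumes "p \<in> acar (Jhat scale lv rv J)"
  obtains X m where "p = (X, m)" "X \<in> acar (Jbar scale lv rv J)" "rep X \<in> J" "m \<in> J"
  using assms rep_in_J by (cases p) (auto simp: Jhat_simps)

lemma alg_embedding_Jhat:
  assumes f: "alg_embedding (Jbar scale lv rv J) (plus_algebra B) f"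
  shows "alg_embedding (Jhat scale lv rv J) (plus_algebra (prod_alg B Ops)) (Jhat_embed f)"
proof -
  let ?Jbar = "Jbar scale lv rv J" and ?Jhat = "Jhat scale lv rv J" and ?E = "plus_algebra (prod_alg B Ops)"
  have f_in: "\<And>X. X \<in> acar ?Jbar \<Longrightarrow> f X \<in> acar B" and f_inj: "inj_on f (acar ?Jbar)"
    and f_add: "\<And>X Y. X \<in> acar ?Jbar \<Longrightarrow> Y \<in> acar ?Jbar \<Longrightarrow> f (aadd ?Jbar X Y) = aadd B (f X) (f Y)"
    and f_smult: "\<And>c X. X \<in> acar ?Jbar \<Longrightarrow> f (asmult ?Jbar c X) = asmult B c (f X)"
    and f_mult: "\<And>X Y. X \<in> acar ?Jbar \<Longrightarrow> Y \<in> acar ?Jbar \<Longrightarrow>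
      f (amult ?Jbar X Y) = amult (plus_algebra B) (f X) (f Y)"
    using f unfolding alg_embedding_def by auto
  note class_simps = Jbar_simps lv_rep_coset rv_rep_coset add_in_J scale_in_J lvp_closed op_null_ext_simps
  show ?thesis
    unfolding alg_embedding_def
  proof (intro conjI ballI allI)
    show "Jhat_embed f ` acar ?Jhat \<subseteq> acar ?E"
      by (auto simp: Jhat_embed_def Jhat_simps prod_alg_simps f_in op_null_ext_mem)
    show "inj_on (Jhat_embed f) (acar ?Jhat)"
      by (auto simp: inj_on_def Jhat_embed_def Jhat_simps dest: inj_onD[OF f_inj])
  next
    fix p q assume "p \<in> acar ?Jhat" "q \<in> acar ?Jhat"
    then obtain X m Y n where p: "p = (X, m)" "X \<in> acar ?Jbar" "rep X \<in> J" "m \<in> J"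
      and q: "q = (Y, n)" "Y \<in> acar ?Jbar" "rep Y \<in> J" "n \<in> J"
      by (elim Jhat_cases)
    show "Jhat_embed f (aadd ?Jhat p q) = aadd ?E (Jhat_embed f p) (Jhat_embed f q)"
      using p q by (simp add: Jhat_embed_def Jhat_simps prod_alg_simps f_add) (simp add: class_simps)
    show "Jhat_embed f (amult ?Jhat p q) = amult ?E (Jhat_embed f p) (Jhat_embed f q)"
      using p q
      by (simp add: Jhat_embed_def Jhat_simps f_mult plus_algebra_prod_alg_mult del: plus_algebra_simps(5))
        (simp add: class_simps op_null_ext_plus_mult del: plus_algebra_simps(5))
  next
    fix c p assume "p \<in> acar ?Jhat"
    then obtain X m where p: "p = (X, m)" "X \<in> acar ?Jbar" "rep X \<in> J" "m \<in> J"
      by (elim Jhat_cases)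
    show "Jhat_embed f (asmult ?Jhat c p) = asmult ?E c (Jhat_embed f p)"
      using p by (simp add: Jhat_embed_def Jhat_simps prod_alg_simps f_smult) (simp add: class_simps)
  qed
qed

lemma k_algebra_Jhat:
  assumes Jbar: "k_algebra (Jbar scale lv rv J)" and B: "assoc_algebra B"
    and f: "alg_embedding (Jbar scale lv rv J) (plus_algebra B) f"
  shows "k_algebra (Jhat scale lv rv J)"
proof (rule k_algebra_pullback[OF _ alg_embedding_Jhat[OF f]])
  have "k_algebra (prod_alg B Ops)"
    using assoc_algebra_prod_alg[OF B assoc_algebra_op_null_ext] by (simp add: assoc_algebra_def)
  then show "k_algebra (plus_algebra (prod_alg B Ops))" by (rule k_algebra_plus_algebra)
  show "subalgebra (acar (Jhat scale lv rv J)) (Jhat scale lv rv J)"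
    using Jbar by (auto simp: subalgebra_def k_algebra_def Jhat_simps Jbar_simps zero_in_J add_in_J
        scale_in_J lvp_closed rvp_closed rep_coset_in_J)
  have "f (azero (Jbar scale lv rv J)) = azero B"
    using alg_embedding_zero[OF Jbar _ f] B
    by (simp add: assoc_algebra_def k_algebra_plus_algebra)
  then show "Jhat_embed f (azero (Jhat scale lv rv J)) = azero (plus_algebra (prod_alg B Ops))"
    by (simp add: Jhat_embed_def Jhat_simps prod_alg_simps Jbar_simps lv_rep_coset rv_rep_coset
        zero_in_J op_null_ext_simps)
qed

end

theorem mainTheorem19:
  fixes scale :: "'k::field_char_0 \<Rightarrow> 'd::ab_group_add \<Rightarrow> 'd"
    and lv rv :: "'d \<Rightarrow> 'd \<Rightarrow> 'd"
    and J :: "'d set"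
  assumes "special_jordan_dialgebra scale lv rv J"
    and "special_jordan_in TYPE('a) (Jbar scale lv rv J)"
  shows "special_jordan_in TYPE(('d set \<times> 'd) list \<Rightarrow> 'k) (Jhat scale lv rv J)"
proof -
  interpret special_jordan_dialg scale lv rv J
    using assms(1) by unfold_locales (simp_all add: special_jordan_dialgebra_def)
  obtain B :: "('k, 'a) kalg" and f where Jbar: "k_algebra (Jbar scale lv rv J)"
    and B: "assoc_algebra B" and f: "alg_embedding (Jbar scale lv rv J) (plus_algebra B) f"
    using assms(2) unfolding special_jordan_in_def by blast
  have "\<exists>(B' :: ('k, ('d set \<times> 'd) list \<Rightarrow> 'k) kalg) f'.
      assoc_algebra B' \<and> alg_embedding (Jhat scale lv rv J) (plus_algebra B') f'"
    by (rule assoc_envelope_on_list_functions[OF assoc_algebra_prod_alg[OF B assoc_algebra_op_null_ext]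
          alg_embedding_Jhat[OF f], of "({}, 0)" "(UNIV, 0)"]) simp
  then show ?thesis
    using k_algebra_Jhat[OF Jbar B f] unfolding special_jordan_in_def by blast
qed

end
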